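(* Let $S\subseteq R$ be an extension of commutative domains. Then $R$ is super-multiplicative if and only if for every maximal ideal $\mathfrak m$ of $S$ the ring $R_{\mathfrak m}$ is super-multiplicative.
   Context: $R_{\mathfrak m}$ denotes the localization of $R$ at the multiplicative set $S\setminus\mathfrak m$. For a commutative ring $A$ and an ideal $I$ with $[A:I]$ finite, $N(I)=[A:I]$ (additive index). $A$ is super-multiplicative if for every pair of $A$-ideals $I,J$ with $[A:IJ]$ finite one has $N(IJ)\geq N(I)N(J)$. *)

theory Defs
  imports Main "HOL-Computational_Algebra.Fraction_Field"
begin

text \<open>Rings are represented as subsets A of a commutative ring type that are
subrings (contain 0, 1, closed under +, -, *).\<close>

definition subring_set :: "'a::comm_ring_1 set \<Rightarrow> bool" where
  "subring_set A \<longleftrightarrow> 0 \<in> A \<and> 1 \<in> A \<and>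
     (\<forall>x\<in>A. \<forall>y\<in>A. x + y \<in> A \<and> x - y \<in> A \<and> x * y \<in> A)"

definition ideal_of :: "'a::comm_ring_1 set \<Rightarrow> 'a set \<Rightarrow> bool" where
  "ideal_of A I \<longleftrightarrow> I \<subseteq> A \<and> 0 \<in> I \<and>
     (\<forall>x\<in>I. \<forall>y\<in>I. x + y \<in> I \<and> x - y \<in> I) \<and>
     (\<forall>a\<in>A. \<forall>x\<in>I. a * x \<in> I)"

definition maximal_ideal_of :: "'a::comm_ring_1 set \<Rightarrow> 'a set \<Rightarrow> bool" where
  "maximal_ideal_of A M \<longleftrightarrow> ideal_of A M \<and> M \<noteq> A \<and>
     (\<forall>J. ideal_of A J \<and> M \<subseteq> J \<longrightarrow> J = M \<or> J = A)"

definition ideal_prod :: "'a::comm_ring_1 set \<Rightarrow> 'a set \<Rightarrow> 'a set \<Rightarrow> 'a set" where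
  "ideal_prod A I J = \<Inter> {K. ideal_of A K \<and> {i * j | i j. i \<in> I \<and> j \<in> J} \<subseteq> K}"

definition cosets_in :: "'a::comm_ring_1 set \<Rightarrow> 'a set \<Rightarrow> 'a set set" where
  "cosets_in A I = (\<lambda>a. {a + i | i. i \<in> I}) ` A"

definition norm_idx :: "'a::comm_ring_1 set \<Rightarrow> 'a set \<Rightarrow> nat" where
  "norm_idx A I = card (cosets_in A I)"

definition super_multiplicative :: "'a::comm_ring_1 set \<Rightarrow> bool" where
  "super_multiplicative A \<longleftrightarrow>
     (\<forall>I J. ideal_of A I \<and> ideal_of A J \<and> finite (cosets_in A (ideal_prod A I J)) \<longrightarrow>
        norm_idx A (ideal_prod A I J) \<ge> norm_idx A I * norm_idx A J)"

text \<open>Localization R_m of the domain R (= UNIV) at S - m, realised inside the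
fraction field of R.\<close>
definition localize :: "'a::idom set \<Rightarrow> 'a set \<Rightarrow> 'a fract set" where
  "localize S m = {Fract r s | r s. s \<in> S \<and> s \<notin> m}"

end

theory Submission
  imports Defs
begin

(*
  Write U = S - m. Every ideal of R\<^sub>m is the extension of its contraction to R, extension
  commutes with products, and R/X \<cong> R\<^sub>m/X R\<^sub>m for every ideal X of R modulo which all elements
  of U are invertible. If I' J' has finite index in R\<^sub>m, the elements of U are units of the finite
  ring R\<^sub>m/I' J', so their powers repeat and they are already invertible modulo I J, where I and
  J are the contractions of I' and J'. Hence the inequality for I', J' is the one for I, J.

  For the converse we induct on [R : I J]. Let m be a maximal ideal of S containing S \<inter> I J. If
  U is invertible modulo I J, the inequality is pulled back from R\<^sub>m. Otherwise some s \<in> U lies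
  in a second maximal ideal m' \<supseteq> S \<inter> I J; writing 1 = a + b with a \<in> m and b \<in> m', a suitable
  power e of a is a nontrivial idempotent modulo I J. Then R/I J splits as
  R/(I J + eR) \<times> R/(I J + (1-e)R), both factors have smaller index,
  (I + fR)(J + fR) = I J + fR for f \<in> {e, 1-e}, and both sides of the inequality are
  multiplicative along the splitting.
*)

section \<open>Ideals of subrings\<close>

lemma subringD:
  assumes "subring_set A"
  shows "0 \<in> A" "1 \<in> A" "x \<in> A \<Longrightarrow> y \<in> A \<Longrightarrow> x + y \<in> A"
    "x \<in> A \<Longrightarrow> y \<in> A \<Longrightarrow> x - y \<in> A" "x \<in> A \<Longrightarrow> y \<in> A \<Longrightarrow> x * y \<in> A"
  using assms unfolding subring_set_def by auto

lemma subring_UNIV: "subring_set (UNIV :: 'a::comm_ring_1 set)"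
  unfolding subring_set_def by simp

lemma subring_power: "subring_set A \<Longrightarrow> x \<in> A \<Longrightarrow> x ^ n \<in> A"
  by (induction n) (auto intro: subringD)

lemma idealD:
  assumes "ideal_of A I"
  shows "I \<subseteq> A" "0 \<in> I" "x \<in> I \<Longrightarrow> y \<in> I \<Longrightarrow> x + y \<in> I"
    "x \<in> I \<Longrightarrow> y \<in> I \<Longrightarrow> x - y \<in> I" "a \<in> A \<Longrightarrow> x \<in> I \<Longrightarrow> a * x \<in> I"
  using assms unfolding ideal_of_def by auto

lemma ideal_uminus: "ideal_of A I \<Longrightarrow> x \<in> I \<Longrightarrow> - x \<in> I"
  by (metis idealD(2,4) diff_0)

lemma ideal_mult_right: "ideal_of A I \<Longrightarrow> x \<in> I \<Longrightarrow> a \<in> A \<Longrightarrow> x * a \<in> I"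
  by (metis idealD(5) mult.commute)

lemma ideal_whole: "subring_set A \<Longrightarrow> ideal_of A A"
  unfolding subring_set_def ideal_of_def by auto

lemma ideal_eq_whole_iff_one:
  assumes "ideal_of A I" "1 \<in> A"
  shows "I = A \<longleftrightarrow> 1 \<in> I"
proof
  assume "1 \<in> I"
  then have "a * 1 \<in> I" if "a \<in> A" for a
    using idealD(5)[OF assms(1) that] by blast
  then show "I = A" using idealD(1)[OF assms(1)] by auto
qed (use assms in auto)

lemma ideal_Inter:
  assumes "F \<noteq> {}" "\<And>K. K \<in> F \<Longrightarrow> ideal_of A K"
  shows "ideal_of A (\<Inter>F)"
  unfolding ideal_of_def
proof (intro conjI ballI)
  show "\<Inter>F \<subseteq> A" "0 \<in> \<Inter>F"
    using assms idealD(1,2) by blast+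
  show "x + y \<in> \<Inter>F" "x - y \<in> \<Inter>F" if "x \<in> \<Inter>F" "y \<in> \<Inter>F" for x y
    using that assms(2) idealD(3,4) by (metis InterE InterI)+
  show "a * x \<in> \<Inter>F" if "a \<in> A" "x \<in> \<Inter>F" for a x
    using that assms(2) idealD(5) by (metis InterE InterI)
qed

lemma ideal_prod_memI: "i \<in> I \<Longrightarrow> j \<in> J \<Longrightarrow> i * j \<in> ideal_prod A I J"
  unfolding ideal_prod_def by blast

lemma ideal_prod_least:
  "ideal_of A K \<Longrightarrow> (\<And>i j. i \<in> I \<Longrightarrow> j \<in> J \<Longrightarrow> i * j \<in> K) \<Longrightarrow> ideal_prod A I J \<subseteq> K"
  unfolding ideal_prod_def by blast

lemma ideal_prod_ideal:
  assumes "subring_set A" "I \<subseteq> A" "J \<subseteq> A"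
  shows "ideal_of A (ideal_prod A I J)"
proof -
  have "A \<in> {K. ideal_of A K \<and> {i * j | i j. i \<in> I \<and> j \<in> J} \<subseteq> K}"
    using assms ideal_whole[OF assms(1)] subringD(5)[OF assms(1)] by blast
  then show ?thesis
    unfolding ideal_prod_def by (intro ideal_Inter) blast+
qed

lemma ideal_prod_ideal_UNIV: "ideal_of UNIV (ideal_prod (UNIV :: 'a::comm_ring_1 set) I J)"
  using ideal_prod_ideal[OF subring_UNIV] by blast

lemma ideal_prod_subset_left: "ideal_of A I \<Longrightarrow> J \<subseteq> A \<Longrightarrow> ideal_prod A I J \<subseteq> I"
  by (rule ideal_prod_least) (auto intro: ideal_mult_right)

lemma ideal_prod_subset_right: "ideal_of A J \<Longrightarrow> I \<subseteq> A \<Longrightarrow> ideal_prod A I J \<subseteq> J"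
  by (rule ideal_prod_least) (auto intro: idealD(5))

definition ideal_sum :: "'a::comm_ring_1 set \<Rightarrow> 'a set \<Rightarrow> 'a set" where
  "ideal_sum I J = {i + j | i j. i \<in> I \<and> j \<in> J}"

definition principal_ideal :: "'a::comm_ring_1 set \<Rightarrow> 'a \<Rightarrow> 'a set" where
  "principal_ideal A a = {a * x | x. x \<in> A}"

lemma ideal_sum_ideal:
  assumes I: "ideal_of A I" and J: "ideal_of A J" and A: "subring_set A"
  shows "ideal_of A (ideal_sum I J)"
  unfolding ideal_of_def
proof (intro conjI ballI)
  show "ideal_sum I J \<subseteq> A"
    using idealD(1)[OF I] idealD(1)[OF J] subringD(3)[OF A] unfolding ideal_sum_def by blast
  show "0 \<in> ideal_sum I J"
    using idealD(2)[OF I] idealD(2)[OF J] unfolding ideal_sum_def by force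
next
  fix x y assume "x \<in> ideal_sum I J" "y \<in> ideal_sum I J"
  then obtain i j i' j' where "i \<in> I" "j \<in> J" "i' \<in> I" "j' \<in> J" "x = i + j" "y = i' + j'"
    unfolding ideal_sum_def by blast
  moreover have "x + y = (i + i') + (j + j')" "x - y = (i - i') + (j - j')"
    using calculation by (simp_all add: algebra_simps)
  ultimately show "x + y \<in> ideal_sum I J" "x - y \<in> ideal_sum I J"
    using idealD(3,4)[OF I] idealD(3,4)[OF J] unfolding ideal_sum_def by blast+
next
  fix a x assume "a \<in> A" "x \<in> ideal_sum I J"
  then obtain i j where "i \<in> I" "j \<in> J" "x = i + j"
    unfolding ideal_sum_def by blast
  moreover have "a * x = a * i + a * j"
    using calculation by (simp add: algebra_simps)
  ultimately show "a * x \<in> ideal_sum I J"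
    using idealD(5)[OF I \<open>a \<in> A\<close>] idealD(5)[OF J \<open>a \<in> A\<close>] unfolding ideal_sum_def by blast
qed

lemma ideal_sum_upper:
  assumes "ideal_of A I" "ideal_of A J"
  shows "I \<subseteq> ideal_sum I J" "J \<subseteq> ideal_sum I J"
proof -
  have "i + 0 \<in> ideal_sum I J" "0 + j \<in> ideal_sum I J" if "i \<in> I" "j \<in> J" for i j
    using that idealD(2)[OF assms(1)] idealD(2)[OF assms(2)] unfolding ideal_sum_def by blast+
  then show "I \<subseteq> ideal_sum I J" "J \<subseteq> ideal_sum I J"
    using idealD(2)[OF assms(1)] idealD(2)[OF assms(2)] by fastforce+
qed

lemma principal_ideal_ideal:
  assumes A: "subring_set A" and a: "a \<in> A"
  shows "ideal_of A (principal_ideal A a)"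
  unfolding ideal_of_def principal_ideal_def
proof (intro conjI ballI)
  show "{a * x |x. x \<in> A} \<subseteq> A" "0 \<in> {a * x |x. x \<in> A}"
    using a subringD[OF A] by force+
next
  fix x y assume "x \<in> {a * x |x. x \<in> A}" "y \<in> {a * x |x. x \<in> A}"
  then obtain u v where "u \<in> A" "v \<in> A" "x = a * u" "y = a * v" by blast
  then show "x + y \<in> {a * x |x. x \<in> A}" "x - y \<in> {a * x |x. x \<in> A}"
    using subringD(3,4)[OF A] by (force simp: algebra_simps)+
next
  fix c x assume "c \<in> A" "x \<in> {a * x |x. x \<in> A}"
  then obtain u where "u \<in> A" "x = a * u" by blast
  then show "c * x \<in> {a * x |x. x \<in> A}"
    using subringD(5)[OF A \<open>c \<in> A\<close>] by (force simp: algebra_simps)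
qed

lemma principal_ideal_self: "subring_set A \<Longrightarrow> a \<in> principal_ideal A a"
  unfolding principal_ideal_def using subringD(2) by force

lemma ideal_inter_subring:
  assumes "subring_set S" "ideal_of UNIV P"
  shows "ideal_of S (S \<inter> P)"
  using assms unfolding subring_set_def ideal_of_def by auto

section \<open>Cosets and indices\<close>

definition coset :: "'a::comm_ring_1 set \<Rightarrow> 'a \<Rightarrow> 'a set" where
  "coset I a = {a + i | i. i \<in> I}"

lemma cosets_in_eq: "cosets_in A I = coset I ` A"
  by (simp add: cosets_in_def coset_def)

lemma coset_eq_iff:
  assumes "ideal_of A I"
  shows "coset I a = coset I b \<longleftrightarrow> a - b \<in> I"
proof
  assume "coset I a = coset I b"
  moreover have "a \<in> coset I a"
    unfolding coset_def using idealD(2)[OF assms] by force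
  ultimately obtain i where "i \<in> I" "a = b + i"
    unfolding coset_def by auto
  then show "a - b \<in> I" by simp
next
  assume ab: "a - b \<in> I"
  have "a + i \<in> coset I b" if "i \<in> I" for i
    using idealD(3)[OF assms ab that] unfolding coset_def by (force simp: algebra_simps)
  moreover have "b + i \<in> coset I a" if "i \<in> I" for i
    using idealD(4)[OF assms that ab] unfolding coset_def by (force simp: algebra_simps)
  ultimately show "coset I a = coset I b"
    unfolding coset_def by blast
qed

lemma kernel_inv_into:
  assumes "\<forall>a\<in>A. \<forall>b\<in>A. g a = g b \<longrightarrow> f a = f b" "x \<in> A"
  shows "f (inv_into A g (g x)) = f x"
proof -
  have "inv_into A g (g x) \<in> A" "g (inv_into A g (g x)) = g x"
    using assms(2) by (simp_all add: inv_into_into f_inv_into_f)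
  then show ?thesis using assms(1)[rule_format, OF _ assms(2)] by simp
qed

lemma image_eq_image_inv_into:
  assumes "\<forall>a\<in>A. \<forall>b\<in>A. g a = g b \<longrightarrow> f a = f b"
  shows "f ` A = (\<lambda>y. f (inv_into A g y)) ` (g ` A)"
  unfolding image_image using kernel_inv_into[OF assms] by (simp cong: image_cong)

lemma card_image_le_of_kernel:
  assumes ker: "\<forall>a\<in>A. \<forall>b\<in>A. g a = g b \<longrightarrow> f a = f b" and fin: "finite (g ` A)"
  shows "finite (f ` A)" "card (f ` A) \<le> card (g ` A)"
  using fin card_image_le image_eq_image_inv_into[OF ker] by auto

lemma card_image_less_of_kernel:
  assumes ker: "\<forall>a\<in>A. \<forall>b\<in>A. g a = g b \<longrightarrow> f a = f b" and fin: "finite (g ` A)"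
    and ab: "a \<in> A" "b \<in> A" "g a \<noteq> g b" "f a = f b"
  shows "card (f ` A) < card (g ` A)"
proof -
  let ?h = "\<lambda>y. f (inv_into A g y)"
  have "?h (g a) = ?h (g b)"
    using ab kernel_inv_into[OF ker] by simp
  then have "\<not> inj_on ?h (g ` A)"
    using ab by (auto dest: inj_onD)
  then have "card (?h ` g ` A) \<noteq> card (g ` A)"
    using eq_card_imp_inj_on[OF fin] by blast
  then show ?thesis
    using card_image_le[OF fin, of ?h] image_eq_image_inv_into[OF ker] by simp
qed

lemma card_image_eq_of_kernel:
  assumes "\<forall>a\<in>A. \<forall>b\<in>A. g a = g b \<longleftrightarrow> f a = f b"
  shows "finite (f ` A) \<longleftrightarrow> finite (g ` A)" "card (f ` A) = card (g ` A)"
proof -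
  have ker: "\<forall>a\<in>A. \<forall>b\<in>A. g a = g b \<longrightarrow> f a = f b" "\<forall>a\<in>A. \<forall>b\<in>A. f a = f b \<longrightarrow> g a = g b"
    using assms by auto
  show fin: "finite (f ` A) \<longleftrightarrow> finite (g ` A)"
    using card_image_le_of_kernel(1)[OF ker(1)] card_image_le_of_kernel(1)[OF ker(2)] by blast
  show "card (f ` A) = card (g ` A)"
  proof (cases "finite (g ` A)")
    case True
    then show ?thesis
      using card_image_le_of_kernel(2)[OF ker(1) True] card_image_le_of_kernel(2)[OF ker(2)] fin
      by simp
  next
    case False
    then show ?thesis using fin by simp
  qed
qed

lemma cosets_in_antimono:
  assumes "ideal_of A X" "ideal_of A Y" "X \<subseteq> Y" "finite (cosets_in A X)"
  shows "finite (cosets_in A Y)" "card (cosets_in A Y) \<le> card (cosets_in A X)"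
    "y \<in> Y \<Longrightarrow> y \<notin> X \<Longrightarrow> card (cosets_in A Y) < card (cosets_in A X)"
proof -
  have ker: "\<forall>a\<in>A. \<forall>b\<in>A. coset X a = coset X b \<longrightarrow> coset Y a = coset Y b"
    using assms(1-3) by (auto simp: coset_eq_iff)
  show "finite (cosets_in A Y)" "card (cosets_in A Y) \<le> card (cosets_in A X)"
    using card_image_le_of_kernel[OF ker] assms(4) by (simp_all add: cosets_in_eq)
  assume y: "y \<in> Y" "y \<notin> X"
  have "y \<in> A" "0 \<in> A"
    using y idealD(1,2)[OF assms(2)] by auto
  moreover have "coset X y \<noteq> coset X 0" "coset Y y = coset Y 0"
    using y assms(1,2) by (simp_all add: coset_eq_iff)
  ultimately show "card (cosets_in A Y) < card (cosets_in A X)"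
    using card_image_less_of_kernel[OF ker] assms(4) unfolding cosets_in_eq by blast
qed

lemma cosets_in_eq_of_surjective_hom:
  assumes A: "subring_set A" and X: "ideal_of A X" and Y: "ideal_of B Y"
    and hom: "\<And>a b. a \<in> A \<Longrightarrow> b \<in> A \<Longrightarrow> \<phi> (a - b) = \<phi> a - \<phi> b"
    and into: "\<phi> ` A \<subseteq> B"
    and mem: "\<And>a. a \<in> A \<Longrightarrow> a \<in> X \<longleftrightarrow> \<phi> a \<in> Y"
    and cover: "\<And>q. q \<in> B \<Longrightarrow> \<exists>a\<in>A. q - \<phi> a \<in> Y"
  shows "finite (cosets_in A X) \<longleftrightarrow> finite (cosets_in B Y)"
    "card (cosets_in A X) = card (cosets_in B Y)"
proof -
  have ker: "\<forall>a\<in>A. \<forall>b\<in>A. coset X a = coset X b \<longleftrightarrow> coset Y (\<phi> a) = coset Y (\<phi> b)"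
    using coset_eq_iff[OF X] coset_eq_iff[OF Y] mem hom subringD(4)[OF A] by simp
  have "coset Y ` B \<subseteq> (\<lambda>a. coset Y (\<phi> a)) ` A"
  proof
    fix c assume "c \<in> coset Y ` B"
    then obtain q a where "q \<in> B" "c = coset Y q" "a \<in> A" "q - \<phi> a \<in> Y"
      using cover by blast
    then show "c \<in> (\<lambda>a. coset Y (\<phi> a)) ` A"
      using coset_eq_iff[OF Y] by blast
  qed
  then have "(\<lambda>a. coset Y (\<phi> a)) ` A = cosets_in B Y"
    using into unfolding cosets_in_eq by blast
  then show "finite (cosets_in A X) \<longleftrightarrow> finite (cosets_in B Y)"
    "card (cosets_in A X) = card (cosets_in B Y)"
    using card_image_eq_of_kernel[OF ker] unfolding cosets_in_eq by simp_all
qed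

lemma finite_cosets_inter_subring:
  assumes S: "subring_set S" and P: "ideal_of UNIV P" and fin: "finite (cosets_in UNIV P)"
  shows "finite (cosets_in S (S \<inter> P))"
proof -
  have "\<forall>a\<in>S. \<forall>b\<in>S. coset P a = coset P b \<longrightarrow> coset (S \<inter> P) a = coset (S \<inter> P) b"
    using coset_eq_iff[OF P] coset_eq_iff[OF ideal_inter_subring[OF S P]] subringD(4)[OF S] by blast
  moreover have "finite (coset P ` S)"
    using fin finite_subset[of "coset P ` S" "cosets_in UNIV P"] unfolding cosets_in_eq by blast
  ultimately show ?thesis
    using card_image_le_of_kernel(1) unfolding cosets_in_eq by blast
qed

lemma norm_idx_whole:
  assumes "subring_set A"
  shows "norm_idx A A = 1"
proof -
  have "coset A a = coset A 0" if "a \<in> A" for a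
    using coset_eq_iff[OF ideal_whole[OF assms]] that by simp
  then have "cosets_in A A = {coset A 0}"
    using subringD(1)[OF assms] unfolding cosets_in_eq by blast
  then show ?thesis
    unfolding norm_idx_def by simp
qed

lemma super_multiplicativeD:
  assumes "super_multiplicative A" "ideal_of A I" "ideal_of A J"
    "finite (cosets_in A (ideal_prod A I J))"
  shows "norm_idx A (ideal_prod A I J) \<ge> norm_idx A I * norm_idx A J"
  using assms unfolding super_multiplicative_def by blast

lemma powers_eventually_periodic:
  assumes A: "subring_set A" and K: "ideal_of A K" and fin: "finite (cosets_in A K)" and a: "a \<in> A"
  obtains i d where "d \<ge> 1" "a ^ i - a ^ (i + d) \<in> K"
proof -
  have "range (\<lambda>k. coset K (a ^ k)) \<subseteq> cosets_in A K"
    unfolding cosets_in_eq using subring_power[OF A a] by blast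
  then have "\<not> inj (\<lambda>k. coset K (a ^ k))"
    using fin finite_subset finite_imageD infinite_UNIV_nat by blast
  then obtain i j where "i < j" "coset K (a ^ i) = coset K (a ^ j)"
    unfolding inj_def by (metis linorder_neqE_nat)
  then show ?thesis
    using that[of "j - i" i] coset_eq_iff[OF K] by simp
qed

lemma power_minus_one_mem_of_invertible:
  assumes A: "subring_set A" and K: "ideal_of A K" and fin: "finite (cosets_in A K)"
    and a: "a \<in> A" and b: "b \<in> A" and ab: "a * b = 1"
  obtains n where "n \<ge> 1" "a ^ n - 1 \<in> K"
proof -
  obtain i d where d: "d \<ge> 1" "a ^ i - a ^ (i + d) \<in> K"
    using powers_eventually_periodic[OF A K fin a] by blast
  have "b ^ i * (a ^ i - a ^ (i + d)) \<in> K"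
    using idealD(5)[OF K subring_power[OF A b] d(2)] .
  moreover have "b ^ i * (a ^ i - a ^ (i + d)) = (a * b) ^ i * (1 - a ^ d)"
    by (simp add: algebra_simps power_add power_mult_distrib)
  ultimately have "1 - a ^ d \<in> K"
    using ab by simp
  then have "a ^ d - 1 \<in> K"
    using ideal_uminus[OF K] by fastforce
  then show ?thesis using that d(1) by blast
qed

lemma power_idempotent_mod:
  assumes A: "subring_set A" and K: "ideal_of A K" and fin: "finite (cosets_in A K)" and a: "a \<in> A"
  obtains N where "N \<ge> 1" "a ^ N - a ^ N * a ^ N \<in> K"
proof -
  obtain i d where d: "d \<ge> 1" "a ^ i - a ^ (i + d) \<in> K"
    using powers_eventually_periodic[OF A K fin a] by blast
  have shift: "a ^ n - a ^ (n + d) \<in> K" if "n \<ge> i" for n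
  proof -
    have "a ^ n - a ^ (n + d) = a ^ (n - i) * (a ^ i - a ^ (i + d))"
      using that by (simp add: algebra_simps flip: power_add)
    then show ?thesis
      using idealD(5)[OF K subring_power[OF A a] d(2)] by simp
  qed
  have iter: "a ^ n - a ^ (n + c * d) \<in> K" if "n \<ge> i" for n c
  proof (induction c)
    case 0
    then show ?case using idealD(2)[OF K] by simp
  next
    case (Suc c)
    have "a ^ n - a ^ (n + Suc c * d) = (a ^ n - a ^ (n + c * d)) + (a ^ (n + c * d) - a ^ (n + c * d + d))"
      by (simp add: algebra_simps)
    then show ?case
      using idealD(3)[OF K Suc.IH shift[of "n + c * d"]] that by simp
  qed
  \<comment> \<open>N is a multiple of the period d beyond the preperiod i, so a ^ N and a ^ (2 * N) agree modulo K.\<close>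
  define N where "N = Suc i * d"
  have "i \<le> i * d"
    using d(1) by (metis mult.right_neutral mult_le_mono2)
  then have "N \<ge> i" "N \<ge> 1"
    unfolding N_def using d(1) by (simp_all add: trans_le_add2)
  moreover from this have "a ^ N - a ^ (N + Suc i * d) \<in> K"
    using iter by blast
  ultimately show ?thesis
    using that by (simp add: N_def power_add)
qed

section \<open>Maximal ideals\<close>

lemma maximal_idealD:
  assumes "subring_set S" "maximal_ideal_of S M"
  shows "ideal_of S M" "M \<subseteq> S" "1 \<notin> M"
proof -
  show M: "ideal_of S M"
    using assms(2) unfolding maximal_ideal_of_def by blast
  then show "M \<subseteq> S" by (rule idealD(1))
  show "1 \<notin> M"
    using ideal_eq_whole_iff_one[OF M subringD(2)[OF assms(1)]] assms(2)
    unfolding maximal_ideal_of_def by blast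
qed

lemma maximal_ideal_sum_eq:
  assumes "subring_set S" "maximal_ideal_of S M" "ideal_of S J" "\<not> J \<subseteq> M"
  shows "ideal_sum M J = S"
proof -
  have M: "ideal_of S M" using maximal_idealD assms(1,2) by blast
  have "ideal_of S (ideal_sum M J)" "M \<subseteq> ideal_sum M J" "J \<subseteq> ideal_sum M J"
    using ideal_sum_ideal[OF M assms(3,1)] ideal_sum_upper[OF M assms(3)] by auto
  then show ?thesis
    using assms(2,4) unfolding maximal_ideal_of_def by blast
qed

lemma maximal_ideal_prime:
  assumes S: "subring_set S" and M: "maximal_ideal_of S M"
    and "x \<in> S" "y \<in> S" "x * y \<in> M" "x \<notin> M"
  shows "y \<in> M"
proof -
  have IM: "ideal_of S M" using maximal_idealD[OF S M] by blast
  have "ideal_sum M (principal_ideal S x) = S"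
    using maximal_ideal_sum_eq[OF S M principal_ideal_ideal[OF S \<open>x \<in> S\<close>]]
      principal_ideal_self[OF S, of x] assms(6) by blast
  then obtain u t where "u \<in> M" "t \<in> S" "u + x * t = 1"
    using subringD(2)[OF S] unfolding ideal_sum_def principal_ideal_def by force
  moreover have "y = u * y + t * (x * y)"
    using calculation by (metis mult.commute mult.left_commute distrib_left mult_1_right)
  ultimately show "y \<in> M"
    using idealD(3)[OF IM] ideal_mult_right[OF IM _ \<open>y \<in> S\<close>] idealD(5)[OF IM \<open>t \<in> S\<close>] assms(5)
    by metis
qed

lemma maximal_ideal_complement_mult:
  assumes "subring_set S" "maximal_ideal_of S M" "s \<in> S" "s \<notin> M" "t \<in> S" "t \<notin> M"
  shows "s * t \<in> S" "s * t \<notin> M"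
  using assms maximal_ideal_prime subringD(5) by blast+

lemma maximal_ideal_power:
  assumes S: "subring_set S" and M: "maximal_ideal_of S M" and "x \<in> S" "x ^ n \<in> M"
  shows "x \<in> M"
  using assms(4)
proof (induction n)
  case 0
  then show ?case using maximal_idealD(3)[OF S M] by simp
next
  case (Suc n)
  then show ?case
    using maximal_ideal_prime[OF S M \<open>x \<in> S\<close> subring_power[OF S \<open>x \<in> S\<close>]] by auto
qed

lemma maximal_ideals_comaximal:
  assumes S: "subring_set S" and "maximal_ideal_of S M" "maximal_ideal_of S M'" "x \<in> M'" "x \<notin> M"
  obtains a b where "a \<in> M" "b \<in> M'" "a + b = 1"
proof -
  have "ideal_sum M M' = S"
    using maximal_ideal_sum_eq[OF S assms(2)] maximal_idealD[OF S assms(3)] assms(4,5) by blast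
  then show ?thesis
    using that subringD(2)[OF S] unfolding ideal_sum_def by force
qed

lemma exists_maximal_ideal_superset:
  assumes S: "subring_set S" and J: "ideal_of S J" "1 \<notin> J" and fin: "finite (cosets_in S J)"
  obtains M where "maximal_ideal_of S M" "J \<subseteq> M"
proof -
  define F where "F = {M. ideal_of S M \<and> J \<subseteq> M \<and> 1 \<notin> M}"
  have "J \<in> F" unfolding F_def using J by blast
  then obtain M where M: "M \<in> F" and least: "\<And>M'. M' \<in> F \<Longrightarrow> card (cosets_in S M) \<le> card (cosets_in S M')"
    using ex_has_least_nat[of "\<lambda>M. M \<in> F" J "\<lambda>M. card (cosets_in S M)"] by blast
  have IM: "ideal_of S M" "J \<subseteq> M" "1 \<notin> M" using M unfolding F_def by auto
  have "maximal_ideal_of S M"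
    unfolding maximal_ideal_of_def
  proof (intro conjI allI impI)
    show "M \<noteq> S" using IM(3) subringD(2)[OF S] by blast
    fix M' assume M': "ideal_of S M' \<and> M \<subseteq> M'"
    show "M' = M \<or> M' = S"
    proof (cases "1 \<in> M'")
      case True
      then show ?thesis using M' ideal_eq_whole_iff_one subringD(2)[OF S] by blast
    next
      case False
      then have "card (cosets_in S M) \<le> card (cosets_in S M')"
        using least M' IM unfolding F_def by blast
      then show ?thesis
        using cosets_in_antimono(1,3)[OF IM(1) _ _ cosets_in_antimono(1)[OF J(1) IM(1,2) fin]] M'
        by (meson not_le subset_antisym subsetI)
    qed
  qed (use IM in blast)
  then show ?thesis using that IM(2) by blast
qed

section \<open>Splitting along an idempotent\<close>

definition ideal_adjoin :: "'a::comm_ring_1 set \<Rightarrow> 'a \<Rightarrow> 'a set" where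
  "ideal_adjoin X e = ideal_sum X (principal_ideal UNIV e)"

lemma mem_ideal_adjoin_iff: "z \<in> ideal_adjoin X e \<longleftrightarrow> (\<exists>x r. x \<in> X \<and> z = x + e * r)"
  unfolding ideal_adjoin_def ideal_sum_def principal_ideal_def by blast

lemma ideal_adjoin:
  assumes "ideal_of UNIV X"
  shows "ideal_of UNIV (ideal_adjoin X e)" "X \<subseteq> ideal_adjoin X e" "e \<in> ideal_adjoin X e"
  unfolding ideal_adjoin_def
  using ideal_sum_ideal[OF assms principal_ideal_ideal] ideal_sum_upper[OF assms principal_ideal_ideal]
    principal_ideal_self subring_UNIV by blast+

lemma cosets_ideal_adjoin_less:
  assumes P: "ideal_of UNIV P" and fin: "finite (cosets_in UNIV P)" and f: "f \<notin> P"
  shows "finite (cosets_in UNIV (ideal_adjoin P f))"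
    "card (cosets_in UNIV (ideal_adjoin P f)) < card (cosets_in UNIV P)"
  using cosets_in_antimono(1,3)[OF P ideal_adjoin(1,2)[OF P] fin] ideal_adjoin(3)[OF P] f
  by blast+

lemma idempotent_complement_eq: "(1 - e) - (1 - e) * (1 - e) = e - e * (e :: 'a::comm_ring_1)"
  by (simp add: algebra_simps)

lemma ideal_adjoin_inter_complement:
  assumes X: "ideal_of UNIV X" and e: "e - e * e \<in> X"
  shows "ideal_adjoin X e \<inter> ideal_adjoin X (1 - e) = X"
proof (intro equalityI subsetI)
  fix z assume "z \<in> ideal_adjoin X e \<inter> ideal_adjoin X (1 - e)"
  then have "z \<in> ideal_adjoin X e" "z \<in> ideal_adjoin X (1 - e)" by auto
  then obtain x r x' r' where xr: "x \<in> X" "z = x + e * r" "x' \<in> X" "z = x' + (1 - e) * r'"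
    unfolding mem_ideal_adjoin_iff by blast
  have "(1 - e) * z = (1 - e) * x + r * (e - e * e)"
    unfolding xr(2) by (simp add: algebra_simps)
  moreover have "e * z = e * x' + r' * (e - e * e)"
    unfolding xr(4) by (simp add: algebra_simps)
  moreover have "(1 - e) * x + r * (e - e * e) \<in> X" "e * x' + r' * (e - e * e) \<in> X"
    using xr(1,3) e idealD(3,5)[OF X] by simp_all
  ultimately have "(1 - e) * z + e * z \<in> X"
    using idealD(3)[OF X] by simp
  then show "z \<in> X"
    by (simp add: algebra_simps)
qed (use ideal_adjoin(2)[OF X] in blast)

lemma cosets_ideal_adjoin_split:
  assumes X: "ideal_of UNIV X" and e: "e - e * e \<in> X"
  shows "finite (cosets_in UNIV X) \<longleftrightarrow>
      finite (cosets_in UNIV (ideal_adjoin X e) \<times> cosets_in UNIV (ideal_adjoin X (1 - e)))"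
    "card (cosets_in UNIV X) =
      card (cosets_in UNIV (ideal_adjoin X e)) * card (cosets_in UNIV (ideal_adjoin X (1 - e)))"
proof -
  define X1 where "X1 = ideal_adjoin X e"
  define X2 where "X2 = ideal_adjoin X (1 - e)"
  have X1: "ideal_of UNIV X1" and X2: "ideal_of UNIV X2"
    unfolding X1_def X2_def using ideal_adjoin(1)[OF X] by blast+
  let ?f = "\<lambda>a. (coset X1 a, coset X2 a)"
  have ker: "\<forall>a\<in>UNIV. \<forall>b\<in>UNIV. ?f a = ?f b \<longleftrightarrow> coset X a = coset X b"
    using ideal_adjoin_inter_complement[OF X e] coset_eq_iff[OF X] coset_eq_iff[OF X1]
      coset_eq_iff[OF X2] unfolding X1_def X2_def by blast
  have "cosets_in UNIV X1 \<times> cosets_in UNIV X2 \<subseteq> range ?f"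
  proof
    fix w assume "w \<in> cosets_in UNIV X1 \<times> cosets_in UNIV X2"
    then obtain a b where w: "w = (coset X1 a, coset X2 b)"
      unfolding cosets_in_eq by blast
    define c where "c = a * (1 - e) + b * e"
    have "a - c = 0 + e * (a - b)" "b - c = 0 + (1 - e) * (b - a)"
      unfolding c_def by (simp_all add: algebra_simps)
    then have "a - c \<in> X1" "b - c \<in> X2"
      unfolding X1_def X2_def mem_ideal_adjoin_iff using idealD(2)[OF X] by blast+
    then have "w = ?f c"
      using w coset_eq_iff[OF X1] coset_eq_iff[OF X2] by simp
    then show "w \<in> range ?f" by blast
  qed
  then have img: "range ?f = cosets_in UNIV X1 \<times> cosets_in UNIV X2"
    unfolding cosets_in_eq by blast
  show "finite (cosets_in UNIV X) \<longleftrightarrow> finite (cosets_in UNIV X1 \<times> cosets_in UNIV X2)"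
    using card_image_eq_of_kernel(1)[OF ker] img by (simp add: cosets_in_eq)
  show "card (cosets_in UNIV X) = card (cosets_in UNIV X1) * card (cosets_in UNIV X2)"
    using card_image_eq_of_kernel(2)[OF ker] img by (simp add: cosets_in_eq card_cartesian_product)
qed

lemma ideal_prod_ideal_adjoin:
  assumes I: "ideal_of UNIV I" and J: "ideal_of UNIV J" and e: "e - e * e \<in> ideal_prod UNIV I J"
  shows "ideal_prod UNIV (ideal_adjoin I e) (ideal_adjoin J e) = ideal_adjoin (ideal_prod UNIV I J) e"
proof
  let ?P = "ideal_prod UNIV I J" and ?Q = "ideal_prod UNIV (ideal_adjoin I e) (ideal_adjoin J e)"
  show "?Q \<subseteq> ideal_adjoin ?P e"
  proof (rule ideal_prod_least[OF ideal_adjoin(1)[OF ideal_prod_ideal_UNIV]])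
    fix p q assume "p \<in> ideal_adjoin I e" "q \<in> ideal_adjoin J e"
    then obtain i r j r' where "i \<in> I" "p = i + e * r" "j \<in> J" "q = j + e * r'"
      unfolding mem_ideal_adjoin_iff by blast
    moreover from this have "p * q = i * j + e * (r * j + i * r' + e * r * r')"
      by (simp add: algebra_simps)
    ultimately show "p * q \<in> ideal_adjoin ?P e"
      unfolding mem_ideal_adjoin_iff by (blast intro: ideal_prod_memI)
  qed
  have Q: "ideal_of UNIV ?Q" by (rule ideal_prod_ideal_UNIV)
  have PQ: "?P \<subseteq> ?Q"
    using ideal_adjoin(2)[OF I] ideal_adjoin(2)[OF J]
    by (intro ideal_prod_least[OF Q]) (blast intro: ideal_prod_memI)
  have ee: "e * e \<in> ?Q"
    using ideal_adjoin(3)[OF I] ideal_adjoin(3)[OF J] by (rule ideal_prod_memI)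
  have er: "e * r \<in> ?Q" for r
  proof -
    have "r * (e * e) + r * (e - e * e) \<in> ?Q"
      using idealD(3,5)[OF Q] ee e PQ by blast
    moreover have "r * (e * e) + r * (e - e * e) = e * r"
      by (simp add: algebra_simps)
    ultimately show ?thesis by simp
  qed
  show "ideal_adjoin ?P e \<subseteq> ?Q"
  proof
    fix z assume "z \<in> ideal_adjoin ?P e"
    then obtain x r where x: "x \<in> ?P" and z: "z = x + e * r"
      unfolding mem_ideal_adjoin_iff by blast
    show "z \<in> ?Q"
      unfolding z using idealD(3)[OF Q _ er] x PQ by blast
  qed
qed

lemma norm_ideal_prod_ge_of_idempotent:
  fixes I J :: "'a::comm_ring_1 set"
  assumes I: "ideal_of UNIV I" and J: "ideal_of UNIV J" and e: "e - e * e \<in> ideal_prod UNIV I J"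
    and ge: "\<And>f. f \<in> {e, 1 - e} \<Longrightarrow>
      norm_idx UNIV (ideal_prod UNIV (ideal_adjoin I f) (ideal_adjoin J f))
        \<ge> norm_idx UNIV (ideal_adjoin I f) * norm_idx UNIV (ideal_adjoin J f)"
  shows "norm_idx UNIV (ideal_prod UNIV I J) \<ge> norm_idx UNIV I * norm_idx UNIV J"
proof -
  let ?P = "ideal_prod UNIV I J"
  have eIJ: "e - e * e \<in> I" "e - e * e \<in> J"
    using e ideal_prod_subset_left[OF I] ideal_prod_subset_right[OF J] by blast+
  have split: "norm_idx UNIV X = norm_idx UNIV (ideal_adjoin X e) * norm_idx UNIV (ideal_adjoin X (1 - e))"
    if "ideal_of UNIV X" "e - e * e \<in> X" for X :: "'a set"
    unfolding norm_idx_def using cosets_ideal_adjoin_split(2)[OF that] .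
  have "norm_idx UNIV ?P =
      norm_idx UNIV (ideal_prod UNIV (ideal_adjoin I e) (ideal_adjoin J e)) *
      norm_idx UNIV (ideal_prod UNIV (ideal_adjoin I (1 - e)) (ideal_adjoin J (1 - e)))"
    using split[OF ideal_prod_ideal_UNIV e] ideal_prod_ideal_adjoin[OF I J e]
      ideal_prod_ideal_adjoin[OF I J, of "1 - e"] idempotent_complement_eq[of e] e by simp
  also have "\<dots> \<ge> (norm_idx UNIV (ideal_adjoin I e) * norm_idx UNIV (ideal_adjoin J e)) *
      (norm_idx UNIV (ideal_adjoin I (1 - e)) * norm_idx UNIV (ideal_adjoin J (1 - e)))"
    using ge by (intro mult_le_mono) auto
  finally show ?thesis
    using split[OF I eIJ(1)] split[OF J eIJ(2)] by (simp add: ac_simps)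
qed

section \<open>Localization at a maximal ideal\<close>

lemma localize_memI: "s \<in> S \<Longrightarrow> s \<notin> M \<Longrightarrow> Fract r s \<in> localize S M"
  unfolding localize_def by blast

lemma localize_memE:
  assumes "q \<in> localize S M"
  obtains r s where "q = Fract r s" "s \<in> S" "s \<notin> M"
  using assms unfolding localize_def by blast

lemma Fract_one_power: "Fract a 1 ^ n = Fract (a ^ n) 1"
  by (induction n) (simp_all add: One_fract_def)

definition extension :: "'a::idom set \<Rightarrow> 'a set \<Rightarrow> 'a set \<Rightarrow> 'a fract set" where
  "extension S M X = {Fract x s | x s. x \<in> X \<and> s \<in> S \<and> s \<notin> M}"

definition contraction :: "'a::idom fract set \<Rightarrow> 'a set" where
  "contraction Y = {a. Fract a 1 \<in> Y}"

definition invertible_mod :: "'a::comm_ring_1 set \<Rightarrow> 'a set \<Rightarrow> 'a set \<Rightarrow> bool" where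
  "invertible_mod S M X \<longleftrightarrow> (\<forall>s\<in>S. s \<notin> M \<longrightarrow> (\<exists>t. s * t - 1 \<in> X))"

lemma contraction_mono: "Y \<subseteq> Y' \<Longrightarrow> contraction Y \<subseteq> contraction Y'"
  unfolding contraction_def by blast

lemma invertible_mod_mono: "invertible_mod S M X \<Longrightarrow> X \<subseteq> X' \<Longrightarrow> invertible_mod S M X'"
  unfolding invertible_mod_def by blast

lemma invertible_mod_ideal_prod:
  assumes "invertible_mod S M I" "invertible_mod S M J"
  shows "invertible_mod S M (ideal_prod UNIV I J)"
  unfolding invertible_mod_def
proof (intro ballI impI)
  fix s assume "s \<in> S" "s \<notin> M"
  then obtain t t' where "s * t - 1 \<in> I" "s * t' - 1 \<in> J"
    using assms unfolding invertible_mod_def by blast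
  then have "- ((s * t - 1) * (s * t' - 1)) \<in> ideal_prod UNIV I J"
    using ideal_uminus[OF ideal_prod_ideal_UNIV] ideal_prod_memI by blast
  moreover have "- ((s * t - 1) * (s * t' - 1)) = s * (t + t' - s * t * t') - 1"
    by (simp add: algebra_simps)
  ultimately show "\<exists>t. s * t - 1 \<in> ideal_prod UNIV I J"
    by auto
qed

context
  fixes S M :: "'a::idom set"
  assumes S: "subring_set S" and M: "maximal_ideal_of S M"
begin

lemma localize_denom_nonzero: "s \<notin> M \<Longrightarrow> s \<noteq> 0"
  using maximal_idealD(1)[OF S M] idealD(2) by blast

lemma Fract_one_mem_localize: "Fract r 1 \<in> localize S M"
  using localize_memI subringD(2)[OF S] maximal_idealD(3)[OF S M] by blast

lemma subring_localize: "subring_set (localize S M)"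
  unfolding subring_set_def
proof (intro conjI ballI)
  show "0 \<in> localize S M" "1 \<in> localize S M"
    using Fract_one_mem_localize[of 0] Fract_one_mem_localize[of 1]
    by (simp_all add: Zero_fract_def One_fract_def)
  fix p q assume "p \<in> localize S M" "q \<in> localize S M"
  then obtain a b c d where h: "p = Fract a b" "b \<in> S" "b \<notin> M" "q = Fract c d" "d \<in> S" "d \<notin> M"
    by (metis localize_memE)
  have "b * d \<in> S" "b * d \<notin> M" "b \<noteq> 0" "d \<noteq> 0"
    using maximal_ideal_complement_mult[OF S M] localize_denom_nonzero h by auto
  then show "p + q \<in> localize S M" "p - q \<in> localize S M" "p * q \<in> localize S M"
    using h localize_memI by simp_all
qed

lemma ideal_extension:
  assumes X: "ideal_of UNIV X"
  shows "ideal_of (localize S M) (extension S M X)"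
  unfolding ideal_of_def
proof (intro conjI ballI)
  show "extension S M X \<subseteq> localize S M"
    unfolding extension_def localize_def by blast
  show "0 \<in> extension S M X"
    using idealD(2)[OF X] subringD(2)[OF S] maximal_idealD(3)[OF S M]
    unfolding extension_def Zero_fract_def by blast
next
  fix p q assume "p \<in> extension S M X" "q \<in> extension S M X"
  then obtain a b c d where h: "p = Fract a b" "b \<in> S" "b \<notin> M" "q = Fract c d" "d \<in> S" "d \<notin> M"
     "a \<in> X" "c \<in> X"
    unfolding extension_def by blast
  have "b * d \<in> S" "b * d \<notin> M" "b \<noteq> 0" "d \<noteq> 0"
    using maximal_ideal_complement_mult[OF S M] localize_denom_nonzero h by auto
  moreover have "a * d + c * b \<in> X" "a * d - c * b \<in> X"
    using h idealD(3,4)[OF X] ideal_mult_right[OF X] by auto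
  ultimately show "p + q \<in> extension S M X" "p - q \<in> extension S M X"
    using h unfolding extension_def by (auto simp: mult.commute)
next
  fix p q assume "p \<in> localize S M" "q \<in> extension S M X"
  then obtain a b c d where h: "p = Fract a b" "b \<in> S" "b \<notin> M" "q = Fract c d" "d \<in> S" "d \<notin> M"
     "c \<in> X"
    unfolding extension_def localize_def by blast
  have "b * d \<in> S" "b * d \<notin> M"
    using maximal_ideal_complement_mult[OF S M] h by auto
  moreover have "a * c \<in> X"
    using h idealD(5)[OF X] by blast
  ultimately show "p * q \<in> extension S M X"
    using h unfolding extension_def by auto
qed

lemma ideal_contraction:
  assumes Y: "ideal_of (localize S M) Y"
  shows "ideal_of UNIV (contraction Y)"
  unfolding ideal_of_def contraction_def
proof (intro conjI ballI)
  show "0 \<in> {a. Fract a 1 \<in> Y}"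
    using idealD(2)[OF Y] by (simp add: Zero_fract_def)
  fix x y assume "x \<in> {a. Fract a 1 \<in> Y}" "y \<in> {a. Fract a 1 \<in> Y}"
  then show "x + y \<in> {a. Fract a 1 \<in> Y}" "x - y \<in> {a. Fract a 1 \<in> Y}"
    using idealD(3,4)[OF Y] by force+
next
  fix r x assume "x \<in> {a. Fract a 1 \<in> Y}"
  then show "r * x \<in> {a. Fract a 1 \<in> Y}"
    using idealD(5)[OF Y Fract_one_mem_localize] by force
qed simp

lemma extension_contraction:
  assumes Y: "ideal_of (localize S M) Y"
  shows "extension S M (contraction Y) = Y"
proof (intro equalityI subsetI)
  fix q assume "q \<in> extension S M (contraction Y)"
  then obtain x s where q: "q = Fract x s" "Fract x 1 \<in> Y" "s \<in> S" "s \<notin> M"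
    unfolding extension_def contraction_def by blast
  then have "Fract 1 s * Fract x 1 \<in> Y"
    using idealD(5)[OF Y localize_memI] by blast
  then show "q \<in> Y"
    using q by simp
next
  fix q assume "q \<in> Y"
  moreover obtain r s where q: "q = Fract r s" "s \<in> S" "s \<notin> M"
    using idealD(1)[OF Y] \<open>q \<in> Y\<close> localize_memE by blast
  ultimately have "Fract s 1 * q \<in> Y"
    using idealD(5)[OF Y Fract_one_mem_localize] by blast
  moreover have "Fract s 1 * q = Fract r 1"
    using q localize_denom_nonzero by (simp add: eq_fract)
  ultimately have "r \<in> contraction Y"
    unfolding contraction_def by simp
  then show "q \<in> extension S M (contraction Y)"
    using q unfolding extension_def by blast
qed

lemma extension_ideal_prod:
  assumes I: "ideal_of UNIV I" and J: "ideal_of UNIV J"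
  shows "extension S M (ideal_prod UNIV I J) = ideal_prod (localize S M) (extension S M I) (extension S M J)"
proof
  let ?L = "localize S M" and ?P = "ideal_prod UNIV I J"
  have L: "subring_set ?L" by (rule subring_localize)
  show "ideal_prod ?L (extension S M I) (extension S M J) \<subseteq> extension S M ?P"
  proof (rule ideal_prod_least[OF ideal_extension[OF ideal_prod_ideal_UNIV]])
    fix p q assume "p \<in> extension S M I" "q \<in> extension S M J"
    then obtain x s y t where h: "p = Fract x s" "x \<in> I" "s \<in> S" "s \<notin> M"
      "q = Fract y t" "y \<in> J" "t \<in> S" "t \<notin> M"
      unfolding extension_def by blast
    then have "s * t \<in> S" "s * t \<notin> M" "x * y \<in> ?P"
      using maximal_ideal_complement_mult[OF S M] ideal_prod_memI by auto
    then show "p * q \<in> extension S M ?P"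
      using h unfolding extension_def by auto
  qed
  let ?Q = "ideal_prod ?L (extension S M I) (extension S M J)"
  have Q: "ideal_of ?L ?Q"
    using ideal_prod_ideal[OF L] idealD(1)[OF ideal_extension] I J by blast
  have "?P \<subseteq> contraction ?Q"
  proof (rule ideal_prod_least[OF ideal_contraction[OF Q]])
    fix i j assume "i \<in> I" "j \<in> J"
    then have "Fract i 1 \<in> extension S M I" "Fract j 1 \<in> extension S M J"
      using subringD(2)[OF S] maximal_idealD(3)[OF S M] unfolding extension_def by blast+
    then show "i * j \<in> contraction ?Q"
      unfolding contraction_def using ideal_prod_memI by fastforce
  qed
  then have "extension S M ?P \<subseteq> extension S M (contraction ?Q)"
    unfolding extension_def by blast
  then show "extension S M ?P \<subseteq> ?Q"
    using extension_contraction[OF Q] by simp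
qed

lemma invertible_mod_contraction:
  assumes Y: "ideal_of (localize S M) Y" and fin: "finite (cosets_in (localize S M) Y)"
  shows "invertible_mod S M (contraction Y)"
  unfolding invertible_mod_def
proof (intro ballI impI)
  fix s assume s: "s \<in> S" "s \<notin> M"
  then have "Fract s 1 * Fract 1 s = 1"
    using localize_denom_nonzero[OF s(2)] by (simp add: One_fract_def eq_fract)
  then obtain n where n: "n \<ge> 1" "Fract s 1 ^ n - 1 \<in> Y"
    using power_minus_one_mem_of_invertible[OF subring_localize Y fin Fract_one_mem_localize
        localize_memI[OF s]] by blast
  have "Fract s 1 ^ n - 1 = Fract (s * s ^ (n - 1) - 1) 1"
    using n(1) by (simp add: Fract_one_power One_fract_def flip: power_Suc)
  then show "\<exists>t. s * t - 1 \<in> contraction Y"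
    using n(2) unfolding contraction_def by auto
qed

lemma contraction_extension:
  assumes X: "ideal_of UNIV X" and inv: "invertible_mod S M X"
  shows "contraction (extension S M X) = X"
proof (intro equalityI subsetI)
  fix a assume "a \<in> contraction (extension S M X)"
  then obtain x s where xs: "Fract a 1 = Fract x s" "x \<in> X" "s \<in> S" "s \<notin> M"
    unfolding contraction_def extension_def by blast
  then have "a * s = x"
    using localize_denom_nonzero by (simp add: eq_fract)
  moreover obtain t where "s * t - 1 \<in> X"
    using inv xs unfolding invertible_mod_def by blast
  ultimately have "t * (a * s) - a * (s * t - 1) \<in> X"
    using xs(2) idealD(4,5)[OF X] by blast
  then show "a \<in> X"
    by (simp add: algebra_simps)
next
  fix a assume "a \<in> X"
  then show "a \<in> contraction (extension S M X)"
    using subringD(2)[OF S] maximal_idealD(3)[OF S M]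
    unfolding contraction_def extension_def by blast
qed

lemma exists_Fract_one_mod_extension:
  assumes X: "ideal_of UNIV X" and inv: "invertible_mod S M X" and q: "q \<in> localize S M"
  shows "\<exists>a. q - Fract a 1 \<in> extension S M X"
proof -
  obtain r s where rs: "q = Fract r s" "s \<in> S" "s \<notin> M"
    using q localize_memE by blast
  moreover obtain t where "s * t - 1 \<in> X"
    using inv rs unfolding invertible_mod_def by blast
  ultimately have "Fract (- (r * (s * t - 1))) s \<in> extension S M X"
    using ideal_uminus[OF X] idealD(5)[OF X] unfolding extension_def by blast
  moreover have "Fract (- (r * (s * t - 1))) s = q - Fract (r * t) 1"
    using rs localize_denom_nonzero by (simp add: eq_fract algebra_simps)
  ultimately show ?thesis by metis
qed

lemma cosets_in_extension:
  assumes X: "ideal_of UNIV X" and inv: "invertible_mod S M X"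
  shows "finite (cosets_in (localize S M) (extension S M X)) \<longleftrightarrow> finite (cosets_in UNIV X)"
    "norm_idx (localize S M) (extension S M X) = norm_idx UNIV X"
proof -
  have mem: "a \<in> X \<longleftrightarrow> Fract a 1 \<in> extension S M X" if "a \<in> UNIV" for a
    using contraction_extension[OF X inv] unfolding contraction_def by blast
  have into: "range (\<lambda>a. Fract a 1) \<subseteq> localize S M"
    using Fract_one_mem_localize by blast
  have cover: "\<exists>a\<in>UNIV. q - Fract a 1 \<in> extension S M X" if "q \<in> localize S M" for q
    using exists_Fract_one_mod_extension[OF X inv that] by blast
  note transfer = cosets_in_eq_of_surjective_hom[OF subring_UNIV X ideal_extension[OF X] _ into mem cover]
  show "finite (cosets_in (localize S M) (extension S M X)) \<longleftrightarrow> finite (cosets_in UNIV X)"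
    "norm_idx (localize S M) (extension S M X) = norm_idx UNIV X"
    using transfer unfolding norm_idx_def by simp_all
qed

lemma norm_ideal_prod_ge_iff_localize:
  assumes I: "ideal_of UNIV I" and J: "ideal_of UNIV J"
    and inv: "invertible_mod S M (ideal_prod UNIV I J)"
  shows "finite (cosets_in (localize S M) (ideal_prod (localize S M) (extension S M I) (extension S M J)))
      \<longleftrightarrow> finite (cosets_in UNIV (ideal_prod UNIV I J))"
    "norm_idx (localize S M) (ideal_prod (localize S M) (extension S M I) (extension S M J))
        \<ge> norm_idx (localize S M) (extension S M I) * norm_idx (localize S M) (extension S M J)
      \<longleftrightarrow> norm_idx UNIV (ideal_prod UNIV I J) \<ge> norm_idx UNIV I * norm_idx UNIV J"
proof -
  have invI: "invertible_mod S M I" and invJ: "invertible_mod S M J"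
    using invertible_mod_mono[OF inv ideal_prod_subset_left[OF I subset_UNIV]]
      invertible_mod_mono[OF inv ideal_prod_subset_right[OF J subset_UNIV]] .
  note prod = extension_ideal_prod[OF I J, symmetric]
  show "finite (cosets_in (localize S M) (ideal_prod (localize S M) (extension S M I) (extension S M J)))
      \<longleftrightarrow> finite (cosets_in UNIV (ideal_prod UNIV I J))"
    unfolding prod by (rule cosets_in_extension(1)[OF ideal_prod_ideal_UNIV inv])
  show "norm_idx (localize S M) (ideal_prod (localize S M) (extension S M I) (extension S M J))
        \<ge> norm_idx (localize S M) (extension S M I) * norm_idx (localize S M) (extension S M J)
      \<longleftrightarrow> norm_idx UNIV (ideal_prod UNIV I J) \<ge> norm_idx UNIV I * norm_idx UNIV J"
    unfolding prod cosets_in_extension(2)[OF ideal_prod_ideal_UNIV inv]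
      cosets_in_extension(2)[OF I invI] cosets_in_extension(2)[OF J invJ] ..
qed

lemma super_multiplicative_localize:
  assumes R: "super_multiplicative (UNIV :: 'a set)"
  shows "super_multiplicative (localize S M)"
  unfolding super_multiplicative_def
proof (intro allI impI, elim conjE)
  let ?L = "localize S M"
  fix I' J' assume I': "ideal_of ?L I'" and J': "ideal_of ?L J'"
    and fin: "finite (cosets_in ?L (ideal_prod ?L I' J'))"
  define I where "I = contraction I'"
  define J where "J = contraction J'"
  have I: "ideal_of UNIV I" and J: "ideal_of UNIV J"
    unfolding I_def J_def using ideal_contraction I' J' by blast+
  have ext: "extension S M I = I'" "extension S M J = J'"
    unfolding I_def J_def using extension_contraction I' J' by blast+
  have K: "ideal_of ?L (ideal_prod ?L I' J')"
    using ideal_prod_ideal[OF subring_localize idealD(1)[OF I'] idealD(1)[OF J']] .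
  have "contraction (ideal_prod ?L I' J') \<subseteq> I" "contraction (ideal_prod ?L I' J') \<subseteq> J"
    unfolding I_def J_def
    using contraction_mono[OF ideal_prod_subset_left[OF I' idealD(1)[OF J']]]
      contraction_mono[OF ideal_prod_subset_right[OF J' idealD(1)[OF I']]] .
  then have "invertible_mod S M I" "invertible_mod S M J"
    using invertible_mod_mono[OF invertible_mod_contraction[OF K fin]] by blast+
  then have inv: "invertible_mod S M (ideal_prod UNIV I J)"
    by (rule invertible_mod_ideal_prod)
  show "norm_idx ?L (ideal_prod ?L I' J') \<ge> norm_idx ?L I' * norm_idx ?L J'"
    using norm_ideal_prod_ge_iff_localize[OF I J inv] super_multiplicativeD[OF R I J] fin
    unfolding ext by blast
qed

lemma norm_ideal_prod_ge_of_invertible_mod: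
  assumes L: "super_multiplicative (localize S M)"
    and I: "ideal_of UNIV I" and J: "ideal_of UNIV J"
    and inv: "invertible_mod S M (ideal_prod UNIV I J)"
    and fin: "finite (cosets_in UNIV (ideal_prod UNIV I J))"
  shows "norm_idx UNIV (ideal_prod UNIV I J) \<ge> norm_idx UNIV I * norm_idx UNIV J"
  using norm_ideal_prod_ge_iff_localize[OF I J inv] fin
    super_multiplicativeD[OF L ideal_extension[OF I] ideal_extension[OF J]] by blast

end

section \<open>The converse direction\<close>

lemma maximal_ideal_containing_non_invertible:
  assumes S: "subring_set S" and P: "ideal_of UNIV P" and fin: "finite (cosets_in UNIV P)"
    and s: "s \<in> S" "\<forall>t. s * t - 1 \<notin> P"
  obtains M where "maximal_ideal_of S M" "s \<in> M" "S \<inter> P \<subseteq> M"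
proof -
  define J where "J = ideal_sum (principal_ideal S s) (S \<inter> P)"
  have SP: "ideal_of S (S \<inter> P)"
    using ideal_inter_subring[OF S P] .
  have J: "ideal_of S J"
    unfolding J_def using ideal_sum_ideal[OF principal_ideal_ideal[OF S s(1)] SP S] .
  have sub: "s \<in> J" "S \<inter> P \<subseteq> J"
    unfolding J_def using ideal_sum_upper[OF principal_ideal_ideal[OF S s(1)] SP]
      principal_ideal_self[OF S] by blast+
  have one: "1 \<notin> J"
  proof
    assume "1 \<in> J"
    then obtain i p where ip: "i \<in> principal_ideal S s" "p \<in> S \<inter> P" "1 = i + p"
      unfolding J_def ideal_sum_def by blast
    then obtain x where "i = s * x"
      unfolding principal_ideal_def by blast
    then have "s * x - 1 = - p"
      using sym[OF ip(3)] by (simp add: algebra_simps)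
    then have "s * x - 1 \<in> P"
      using ideal_uminus[OF P] ip(2) by simp
    then show False using s(2) by blast
  qed
  have "finite (cosets_in S J)"
    using cosets_in_antimono(1)[OF SP J sub(2) finite_cosets_inter_subring[OF S P fin]] .
  then obtain M where "maximal_ideal_of S M" "J \<subseteq> M"
    using exists_maximal_ideal_superset[OF S J one] by blast
  then show ?thesis
    using that sub by blast
qed

lemma idempotent_mod_of_comaximal:
  assumes S: "subring_set S" and P: "ideal_of UNIV P" and fin: "finite (cosets_in UNIV P)"
    and M: "maximal_ideal_of S M" "S \<inter> P \<subseteq> M"
    and M': "maximal_ideal_of S M'" "S \<inter> P \<subseteq> M'"
    and ab: "a \<in> M" "b \<in> M'" "a + b = 1"
  obtains e where "e - e * e \<in> P" "e \<notin> P" "1 - e \<notin> P"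
proof -
  have aS: "a \<in> S"
    using ab(1) maximal_idealD(2)[OF S M(1)] by blast
  obtain N where N: "N \<ge> 1" "a ^ N - a ^ N * a ^ N \<in> P"
    using power_idempotent_mod[OF subring_UNIV P fin UNIV_I] by blast
  have eS: "a ^ N \<in> S" "1 - a ^ N \<in> S"
    using subring_power[OF S aS] subringD(2,4)[OF S] by blast+
  have "a ^ N \<notin> P"
  proof
    assume "a ^ N \<in> P"
    then have "a \<in> M'"
      using eS M'(2) maximal_ideal_power[OF S M'(1) aS] by blast
    then have "1 \<in> M'"
      using ab idealD(3)[OF maximal_idealD(1)[OF S M'(1)]] by metis
    then show False using maximal_idealD(3)[OF S M'(1)] by blast
  qed
  moreover have "1 - a ^ N \<notin> P"
  proof
    assume "1 - a ^ N \<in> P"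
    moreover have "a ^ N \<in> M"
      using N(1) idealD(5)[OF maximal_idealD(1)[OF S M(1)] subring_power[OF S aS] ab(1)]
      by (metis One_nat_def Suc_pred less_eq_Suc_le power_Suc2)
    ultimately have "(1 - a ^ N) + a ^ N \<in> M"
      using eS M(2) idealD(3)[OF maximal_idealD(1)[OF S M(1)]] by blast
    then show False using maximal_idealD(3)[OF S M(1)] by simp
  qed
  ultimately show ?thesis
    using that N(2) by blast
qed

lemma invertible_mod_or_idempotent:
  assumes S: "subring_set S" and P: "ideal_of UNIV P" and fin: "finite (cosets_in UNIV P)"
    and one: "1 \<notin> P"
  shows "(\<exists>M. maximal_ideal_of S M \<and> invertible_mod S M P) \<or> (\<exists>e. e - e * e \<in> P \<and> e \<notin> P \<and> 1 - e \<notin> P)"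
proof -
  obtain M where M: "maximal_ideal_of S M" "S \<inter> P \<subseteq> M"
    using exists_maximal_ideal_superset[OF S ideal_inter_subring[OF S P] _
        finite_cosets_inter_subring[OF S P fin]] one by blast
  show ?thesis
  proof (cases "invertible_mod S M P")
    case False
    then obtain s where s: "s \<in> S" "s \<notin> M" "\<forall>t. s * t - 1 \<notin> P"
      unfolding invertible_mod_def by blast
    then obtain M' where M': "maximal_ideal_of S M'" "s \<in> M'" "S \<inter> P \<subseteq> M'"
      using maximal_ideal_containing_non_invertible[OF S P fin] by blast
    then obtain a b where "a \<in> M" "b \<in> M'" "a + b = 1"
      using maximal_ideals_comaximal[OF S M(1)] s(2) by blast
    then show ?thesis
      using idempotent_mod_of_comaximal[OF S P fin M M'(1,3)] by blast
  qed (use M in blast)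
qed

lemma super_multiplicative_of_localize:
  fixes S :: "'a::idom set"
  assumes S: "subring_set S"
    and local: "\<forall>M. maximal_ideal_of S M \<longrightarrow> super_multiplicative (localize S M)"
  shows "super_multiplicative (UNIV :: 'a set)"
  unfolding super_multiplicative_def
proof (intro allI impI, elim conjE)
  fix I J :: "'a set"
  assume "ideal_of UNIV I" "ideal_of UNIV J" "finite (cosets_in UNIV (ideal_prod UNIV I J))"
  then show "norm_idx UNIV (ideal_prod UNIV I J) \<ge> norm_idx UNIV I * norm_idx UNIV J"
  proof (induction "card (cosets_in UNIV (ideal_prod UNIV I J))" arbitrary: I J rule: less_induct)
    case less
    let ?P = "ideal_prod UNIV I J"
    have I: "ideal_of UNIV I" and J: "ideal_of UNIV J" and fin: "finite (cosets_in UNIV ?P)"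
      using less.prems by blast+
    have P: "ideal_of UNIV ?P" by (rule ideal_prod_ideal_UNIV)
    consider "1 \<in> ?P" | M where "maximal_ideal_of S M" "invertible_mod S M ?P"
      | e where "e - e * e \<in> ?P" "e \<notin> ?P" "1 - e \<notin> ?P"
      using invertible_mod_or_idempotent[OF S P fin] by blast
    then show ?case
    proof cases
      case 1
      then have "?P = UNIV" "I = UNIV" "J = UNIV"
        using ideal_eq_whole_iff_one P I J ideal_prod_subset_left[OF I] ideal_prod_subset_right[OF J]
        by blast+
      then show ?thesis
        using norm_idx_whole[OF subring_UNIV, where 'a='a] by simp
    next
      case 2
      then show ?thesis
        using norm_ideal_prod_ge_of_invertible_mod[OF S _ _ I J _ fin] local by blast
    next
      case 3
      have "norm_idx UNIV (ideal_prod UNIV (ideal_adjoin I f) (ideal_adjoin J f))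
          \<ge> norm_idx UNIV (ideal_adjoin I f) * norm_idx UNIV (ideal_adjoin J f)"
        if f: "f \<in> {e, 1 - e}" for f
      proof -
        have f_idem: "f - f * f \<in> ?P" and f_notin: "f \<notin> ?P"
          using f 3 idempotent_complement_eq[of e] by (auto simp only: insert_iff empty_iff)
        show ?thesis
          using less.hyps[OF _ ideal_adjoin(1)[OF I, of f] ideal_adjoin(1)[OF J, of f]]
            cosets_ideal_adjoin_less[OF P fin f_notin]
          unfolding ideal_prod_ideal_adjoin[OF I J f_idem] by blast
      qed
      then show ?thesis
        using norm_ideal_prod_ge_of_idempotent[OF I J 3(1)] by blast
    qed
  qed
qed

theorem lemma2p9:
  fixes S :: "'a::idom set"
  assumes "subring_set S"
  shows "super_multiplicative (UNIV :: 'a set) \<longleftrightarrow>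
    (\<forall>m. maximal_ideal_of S m \<longrightarrow> super_multiplicative (localize S m))"
  using super_multiplicative_localize[OF assms] super_multiplicative_of_localize[OF assms] by blast

end
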